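(* Let $k\ge 2$ and $n\ge 1$ be integers, $E=\{0,\dots,k-1\}$, and let $L_n\subseteq E^n$ and $\varphi:L_n\to E^{n-1}$ be as defined in the context. Then $\varphi$ is a bijection, and for every $A\subseteq L_n$, $A$ is an intersecting antichain in $E^n$ if and only if $\varphi(A)$ is an intersecting antichain in $E^{n-1}$ (equivalently, both $\varphi$ and $\varphi^{-1}$ map intersecting antichains to intersecting antichains).
   Context: For $\mathbf a=(a_1,\dots,a_m),\mathbf b=(b_1,\dots,b_m)\in E^m$ write $\mathbf a\preceq\mathbf b$ if $a_i\le b_i$ for all $i$. A set $A\subseteq E^m$ is an antichain if there are no distinct $\mathbf a,\mathbf b\in A$ with $\mathbf a\preceq\mathbf b$. A set $A\subseteq E^m$ is intersecting if for all $\mathbf a,\mathbf b\in A$ (including $\mathbf a=\mathbf b$) there is $i$ with $a_i+b_i\ge k$. The weight is $w(\mathbf a)=a_1+\dots+a_m$, and $\mathcal B_t=\{\mathbf a\in E^n: w(\mathbf a)=t\}$. Let $g=\lfloor n(k-1)/2\rfloor$ and $C_i=\{\mathbf a\in E^n: a_1=i\}$. Define $L_n=(\mathcal B_0\cup\dots\cup\mathcal B_g)\cap(C_0\cup C_{k-1})$ if $n(k-1)$ is odd, and $L_n=((\mathcal B_0\cup\dots\cup\mathcal B_{g-1})\cap(C_0\cup C_{k-1}))\cup(\mathcal B_g\cap C_0)$ if $n(k-1)$ is even. For $a\in E$ let $\overline a=k-1-a$. Define $\varphi(a_1,\dots,a_n)=(a_2,\dots,a_n)$ if $a_1=0$, and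 $\varphi(a_1,\dots,a_n)=(\overline{a}_2,\dots,\overline{a}_n)$ if $a_1=k-1$. *)

theory Defs
  imports Main
begin

definition vecs :: "nat \<Rightarrow> nat \<Rightarrow> nat list set" where
  "vecs k m = {a. length a = m \<and> (\<forall>x\<in>set a. x < k)}"

definition vle :: "nat list \<Rightarrow> nat list \<Rightarrow> bool" where
  "vle a b = list_all2 (\<le>) a b"

definition antichain_in :: "nat \<Rightarrow> nat \<Rightarrow> nat list set \<Rightarrow> bool" where
  "antichain_in k m A \<longleftrightarrow> A \<subseteq> vecs k m \<and>
     (\<forall>a\<in>A. \<forall>b\<in>A. a \<noteq> b \<longrightarrow> \<not> vle a b)"

definition intersecting_in :: "nat \<Rightarrow> nat \<Rightarrow> nat list set \<Rightarrow> bool" where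
  "intersecting_in k m A \<longleftrightarrow> A \<subseteq> vecs k m \<and>
     (\<forall>a\<in>A. \<forall>b\<in>A. \<exists>i<m. a ! i + b ! i \<ge> k)"

definition weight :: "nat list \<Rightarrow> nat" where
  "weight a = sum_list a"

text \<open>The set L_n (first coordinate a_1 is a ! 0).\<close>
definition Lset :: "nat \<Rightarrow> nat \<Rightarrow> nat list set" where
  "Lset k n = (let g = n * (k - 1) div 2 in
     if odd (n * (k - 1)) then
       {a \<in> vecs k n. weight a \<le> g \<and> (a ! 0 = 0 \<or> a ! 0 = k - 1)}
     else
       {a \<in> vecs k n. (weight a < g \<and> (a ! 0 = 0 \<or> a ! 0 = k - 1))
                      \<or> (weight a = g \<and> a ! 0 = 0)})"

definition bar :: "nat \<Rightarrow> nat \<Rightarrow> nat" where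
  "bar k a = k - 1 - a"

definition phi :: "nat \<Rightarrow> nat list \<Rightarrow> nat list" where
  "phi k a = (if a ! 0 = 0 then tl a else map (bar k) (tl a))"

end

theory Submission
  imports Defs
begin

text \<open>
  Complementation a \<mapsto> k - 1 - a is an order-reversing involution of E^m, and two vectors
  intersect exactly when neither lies below the complement of the other, so being an intersecting
  antichain is a condition on pairs that only involves the order and complements. The weight bound makes \<phi> invertible (the first
  coordinate is recovered from the weight of the image) and, since complements are heavy, it also rules
  out precisely those comparabilities with complements that would break the correspondence of pairs.
\<close>

lemma vle_Cons [simp]: "vle (x # a) (y # b) \<longleftrightarrow> x \<le> y \<and> vle a b"
  by (simp add: vle_def)

lemma vle_iff_nth: "vle a b \<longleftrightarrow> length a = length b \<and> (\<forall>i<length a. a ! i \<le> b ! i)"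
  by (simp add: vle_def list_all2_conv_all_nth)

lemma sum_list_mono_vle: "vle a b \<Longrightarrow> sum_list a \<le> sum_list b"
  unfolding vle_def by (induction rule: list_all2_induct) auto

lemma Cons_in_vecs_iff [simp]: "x # a \<in> vecs k (Suc m) \<longleftrightarrow> x < k \<and> a \<in> vecs k m"
  by (auto simp: vecs_def)

lemma nth_less_if_in_vecs: "a \<in> vecs k m \<Longrightarrow> i < m \<Longrightarrow> a ! i < k"
  by (simp add: vecs_def)

lemma map_bar_in_vecs: "a \<in> vecs k m \<Longrightarrow> map (bar k) a \<in> vecs k m"
  by (auto simp: vecs_def bar_def)

lemma map_bar_map_bar: "a \<in> vecs k m \<Longrightarrow> map (bar k) (map (bar k) a) = a"
  by (induction a arbitrary: m) (auto simp: vecs_def bar_def)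

lemma sum_list_map_bar: "a \<in> vecs k m \<Longrightarrow> sum_list (map (bar k) a) + sum_list a = m * (k - 1)"
  by (induction a arbitrary: m) (auto simp: vecs_def bar_def)

lemma vle_map_bar_iff:
  assumes "a \<in> vecs k m" "b \<in> vecs k m"
  shows "vle (map (bar k) a) (map (bar k) b) \<longleftrightarrow> vle b a"
proof -
  have "bar k (a ! i) \<le> bar k (b ! i) \<longleftrightarrow> b ! i \<le> a ! i" if "i < m" for i
    using nth_less_if_in_vecs[OF assms(1) that] nth_less_if_in_vecs[OF assms(2) that]
    by (auto simp: bar_def)
  then show ?thesis
    using assms by (auto simp: vle_iff_nth vecs_def)
qed

lemma intersect_iff_not_vle_map_bar:
  assumes "a \<in> vecs k m" "b \<in> vecs k m"
  shows "(\<exists>i<m. k \<le> a ! i + b ! i) \<longleftrightarrow> \<not> vle a (map (bar k) b)"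
proof -
  have "a ! i \<le> bar k (b ! i) \<longleftrightarrow> a ! i + b ! i < k" if "i < m" for i
    using nth_less_if_in_vecs[OF assms(1) that] nth_less_if_in_vecs[OF assms(2) that]
    by (auto simp: bar_def)
  then show ?thesis
    using assms by (auto simp: vle_iff_nth vecs_def not_le)
qed

lemma not_vle_map_bar_if_light:
  assumes "a \<in> vecs k m" "b \<in> vecs k m" "sum_list a + sum_list b < m * (k - 1)"
  shows "\<not> vle (map (bar k) a) b"
  using sum_list_mono_vle sum_list_map_bar[OF assms(1)] assms(3) by fastforce

lemma Lset_iff:
  assumes "k \<ge> 2"
  shows "a \<in> Lset k n \<longleftrightarrow> a \<in> vecs k n \<and>
    (a ! 0 = 0 \<and> 2 * weight a \<le> n * (k - 1) \<or> a ! 0 = k - 1 \<and> 2 * weight a < n * (k - 1))"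
proof -
  define N where "N = n * (k - 1)"
  have odd: "w \<le> N div 2 \<longleftrightarrow> 2 * w \<le> N" "w \<le> N div 2 \<longleftrightarrow> 2 * w < N" if "odd N" for w
    using that by (auto elim!: oddE)
  have even: "w < N div 2 \<longleftrightarrow> 2 * w < N" "w = N div 2 \<longleftrightarrow> 2 * w = N" if "even N" for w
    using that by (auto elim!: evenE)
  show ?thesis
    unfolding Lset_def Let_def N_def[symmetric]
    using odd[of "weight a"] even[of "weight a"] assms by auto
qed

lemma Cons_in_Lset_iff:
  assumes "k \<ge> 2"
  shows "x # a \<in> Lset k (Suc m) \<longleftrightarrow> a \<in> vecs k m \<and>
    (x = 0 \<and> 2 * sum_list a \<le> Suc m * (k - 1) \<or> x = k - 1 \<and> 2 * sum_list a + (k - 1) < m * (k - 1))"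
  using assms by (auto simp: Lset_iff weight_def)

lemma Lset_SucE:
  assumes "k \<ge> 2" "a \<in> Lset k (Suc m)"
  obtains a' where "a = 0 # a'" "a' \<in> vecs k m" "2 * sum_list a' \<le> Suc m * (k - 1)"
  | a' where "a = (k - 1) # a'" "a' \<in> vecs k m" "2 * sum_list a' + (k - 1) < m * (k - 1)"
proof -
  obtain x a' where "a = x # a'"
    using assms by (cases a) (auto simp: Lset_iff vecs_def)
  then show ?thesis
    using that assms by (auto simp: Cons_in_Lset_iff)
qed

definition phi_inv :: "nat \<Rightarrow> nat list \<Rightarrow> nat list" where
  "phi_inv k b =
    (if 2 * sum_list b \<le> Suc (length b) * (k - 1) then 0 # b else (k - 1) # map (bar k) b)"

lemma phi_inv_in_Lset:
  assumes "k \<ge> 2" "b \<in> vecs k m"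
  shows "phi_inv k b \<in> Lset k (Suc m)"
proof -
  have "length b = m"
    using assms(2) by (simp add: vecs_def)
  then show ?thesis
    using assms sum_list_map_bar[OF assms(2)] map_bar_in_vecs[OF assms(2)]
    by (auto simp: phi_inv_def Cons_in_Lset_iff)
qed

lemma phi_phi_inv: "k \<ge> 2 \<Longrightarrow> b \<in> vecs k m \<Longrightarrow> phi k (phi_inv k b) = b"
  by (simp add: phi_inv_def phi_def map_bar_map_bar del: map_map)

lemma phi_inv_phi:
  assumes "k \<ge> 2" "a \<in> Lset k (Suc m)"
  shows "phi_inv k (phi k a) = a"
proof (cases rule: Lset_SucE[OF assms])
  case (1 a')
  then show ?thesis
    by (simp add: phi_def phi_inv_def vecs_def)
next
  case (2 a')
  then show ?thesis
    using assms(1) sum_list_map_bar[of a' k m] map_bar_map_bar[of a' k m]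
    by (auto simp: phi_def phi_inv_def vecs_def simp del: map_map)
qed

lemma phi_in_vecs: "k \<ge> 2 \<Longrightarrow> a \<in> Lset k (Suc m) \<Longrightarrow> phi k a \<in> vecs k m"
  by (erule Lset_SucE) (auto simp: phi_def map_bar_in_vecs)

lemma bij_betw_phi: "k \<ge> 2 \<Longrightarrow> bij_betw (phi k) (Lset k (Suc m)) (vecs k m)"
  by (rule bij_betw_byWitness[where f' = "phi_inv k"])
    (auto simp: phi_inv_phi phi_phi_inv phi_in_vecs phi_inv_in_Lset)

text \<open>Two vectors, possibly equal, that may both belong to an intersecting antichain.\<close>
definition compatible :: "nat \<Rightarrow> nat list \<Rightarrow> nat list \<Rightarrow> bool" where
  "compatible k a b \<longleftrightarrow> \<not> vle a (map (bar k) b) \<and> (a \<noteq> b \<longrightarrow> \<not> vle a b \<and> \<not> vle b a)"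

lemma intersecting_antichain_iff_compatible:
  "intersecting_in k m A \<and> antichain_in k m A \<longleftrightarrow>
    A \<subseteq> vecs k m \<and> (\<forall>a\<in>A. \<forall>b\<in>A. compatible k a b)"
  using intersect_iff_not_vle_map_bar
  by (auto simp: intersecting_in_def antichain_in_def compatible_def subset_iff)

lemma compatible_sym:
  assumes "a \<in> vecs k m" "b \<in> vecs k m"
  shows "compatible k a b \<longleftrightarrow> compatible k b a"
  using vle_map_bar_iff[OF map_bar_in_vecs[OF assms(2)] assms(1)] map_bar_map_bar[OF assms(2)]
  by (auto simp: compatible_def simp del: map_map)

lemma compatible_Cons_zero_zero: "compatible k (0 # a) (0 # b) \<longleftrightarrow> compatible k a b"
  by (simp add: compatible_def)

lemma compatible_Cons_top_top:
  assumes "k \<ge> 2" "a \<in> vecs k m" "b \<in> vecs k m" "sum_list a + sum_list b < m * (k - 1)"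
  shows "compatible k ((k - 1) # a) ((k - 1) # b) \<longleftrightarrow> compatible k (map (bar k) a) (map (bar k) b)"
proof -
  have "map (bar k) a = map (bar k) b \<longleftrightarrow> a = b"
    using map_bar_map_bar[OF assms(2)] map_bar_map_bar[OF assms(3)] by metis
  then show ?thesis
    using assms not_vle_map_bar_if_light[OF assms(2-4)] vle_map_bar_iff[OF assms(2,3)]
      vle_map_bar_iff[OF assms(3,2)] map_bar_map_bar[OF assms(3)]
    by (auto simp: compatible_def bar_def simp del: map_map)
qed

lemma compatible_Cons_zero_top:
  assumes "k \<ge> 2" "a \<in> vecs k m" "b \<in> vecs k m" "sum_list a + sum_list b < m * (k - 1)"
  shows "compatible k (0 # a) ((k - 1) # b) \<longleftrightarrow> compatible k a (map (bar k) b)"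
proof -
  have "\<not> vle (map (bar k) b) a"
    using assms by (intro not_vle_map_bar_if_light) auto
  then show ?thesis
    using assms map_bar_map_bar[OF assms(3)] by (auto simp: compatible_def bar_def simp del: map_map)
qed

lemma compatible_phi_iff:
  assumes k: "k \<ge> 2" and a: "a \<in> Lset k (Suc m)" and b: "b \<in> Lset k (Suc m)"
  shows "compatible k (phi k a) (phi k b) \<longleftrightarrow> compatible k a b"
proof -
  have phi_top: "phi k ((k - 1) # c) = map (bar k) c" for c
    using k by (simp add: phi_def)
  have in_vecs: "a \<in> vecs k (Suc m)" "b \<in> vecs k (Suc m)"
    using a b k by (auto simp: Lset_iff)
  show ?thesis
  proof (cases rule: Lset_SucE[OF k a])
    case (1 a')
    note A = this
    show ?thesis
    proof (cases rule: Lset_SucE[OF k b])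
      case (1 b')
      then show ?thesis
        using A by (simp add: phi_def compatible_Cons_zero_zero)
    next
      case (2 b')
      then show ?thesis
        using A k phi_top compatible_Cons_zero_top[of k a' m b'] by (simp add: phi_def)
    qed
  next
    case (2 a')
    note A = this
    show ?thesis
    proof (cases rule: Lset_SucE[OF k b])
      case (1 b')
      then have "compatible k b a \<longleftrightarrow> compatible k (phi k b) (phi k a)"
        using A k phi_top compatible_Cons_zero_top[of k b' m a'] by (simp add: phi_def)
      moreover have "phi k a \<in> vecs k m" "phi k b \<in> vecs k m"
        using a b k by (auto simp: phi_in_vecs)
      ultimately show ?thesis
        using in_vecs compatible_sym by metis
    next
      case (2 b')
      then show ?thesis
        using A k phi_top compatible_Cons_top_top[of k a' m b'] by simp
    qed
  qed
qed

theorem theorem1: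
  fixes k n :: nat
  assumes "k \<ge> 2" and "n \<ge> 1"
  shows "bij_betw (phi k) (Lset k n) (vecs k (n - 1)) \<and>
    (\<forall>A. A \<subseteq> Lset k n \<longrightarrow>
       ((intersecting_in k n A \<and> antichain_in k n A) \<longleftrightarrow>
        (intersecting_in k (n - 1) (phi k ` A) \<and> antichain_in k (n - 1) (phi k ` A))))"
proof -
  obtain m where n: "n = Suc m"
    using assms(2) by (cases n) auto
  have bij: "bij_betw (phi k) (Lset k (Suc m)) (vecs k m)"
    using assms(1) by (rule bij_betw_phi)
  have "intersecting_in k (Suc m) A \<and> antichain_in k (Suc m) A \<longleftrightarrow>
        intersecting_in k m (phi k ` A) \<and> antichain_in k m (phi k ` A)"
    if A: "A \<subseteq> Lset k (Suc m)" for A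
  proof -
    have "A \<subseteq> vecs k (Suc m)" "phi k ` A \<subseteq> vecs k m"
      using A assms(1) by (auto simp: Lset_iff phi_in_vecs)
    moreover have "(\<forall>a\<in>A. \<forall>b\<in>A. compatible k a b) \<longleftrightarrow>
        (\<forall>a\<in>phi k ` A. \<forall>b\<in>phi k ` A. compatible k a b)"
      using A compatible_phi_iff[OF assms(1), where m = m] by (simp add: subset_iff)
    ultimately show ?thesis
      by (simp add: intersecting_antichain_iff_compatible)
  qed
  then show ?thesis
    using bij n by simp
qed

end
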